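(* Let $n\ge2$, $1\le k\le n-1$, and let $X$ be a continuous random variable. Then \[ E[X(n)\mid X(n-k)=u,\ X(n+1)=v]=\frac{u+kv}{k+1}\qquad (l_F<u<v<r_F) \] if and only if $l_F>-\infty$, $r_F=\infty$ and $F(x)=1-e^{-c(x-l_F)}$ for $x\ge l_F$, for some constant $c>0$.
   Context: $X_1,X_2,\dots$ are i.i.d. copies of $X$ with distribution function $F$; $l_F=\inf\{x:F(x)>0\}$, $r_F=\sup\{x:F(x)<1\}$. Upper record times: $L(1)=1$, $L(m)=\min\{j>L(m-1): X_j>X_{L(m-1)}\}$; upper record values $X(m)=X_{L(m)}$. With $R(x)=-\ln(1-F(x))$, conditional expectations given $X(n-k)=u$, $X(n+r)=v$ are taken with respect to the conditional density $\frac{(k+r-1)!}{(k-1)!(r-1)!}[\frac{R(t)-R(u)}{R(v)-R(u)}]^{k-1}[\frac{R(v)-R(t)}{R(v)-R(u)}]^{r-1}\frac{R'(t)}{R(v)-R(u)}$, $u<t<v$. *)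

theory Defs
  imports "HOL-Probability.Probability"
begin

definition lF :: "(real \<Rightarrow> real) \<Rightarrow> ereal" where
  "lF F = Inf {ereal x | x. F x > 0}"

definition rF :: "(real \<Rightarrow> real) \<Rightarrow> ereal" where
  "rF F = Sup {ereal x | x. F x < 1}"

definition recR :: "(real \<Rightarrow> real) \<Rightarrow> real \<Rightarrow> real" where
  "recR F x = - ln (1 - F x)"

text \<open>Conditional density of X(n+j) given X(n-k) = u and X(n+r) = v (here with the
  position of the record between them determined by k and r as in the paper).  For
  an absolutely continuous F with density f, R'(t) = f t / (1 - F t) (a.e.).\<close>
definition rec_cond_density ::
  "(real \<Rightarrow> real) \<Rightarrow> (real \<Rightarrow> real) \<Rightarrow> nat \<Rightarrow> nat \<Rightarrow> real \<Rightarrow> real \<Rightarrow> real \<Rightarrow> real" where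
  "rec_cond_density F f k r u v t =
     fact (k + r - 1) / (fact (k - 1) * fact (r - 1))
     * ((recR F t - recR F u) / (recR F v - recR F u)) ^ (k - 1)
     * ((recR F v - recR F t) / (recR F v - recR F u)) ^ (r - 1)
     * ((f t / (1 - F t)) / (recR F v - recR F u))"

definition rec_cond_exp ::
  "(real \<Rightarrow> real) \<Rightarrow> (real \<Rightarrow> real) \<Rightarrow> nat \<Rightarrow> nat \<Rightarrow> real \<Rightarrow> real \<Rightarrow> real" where
  "rec_cond_exp F f k r u v =
     (LBINT t:{u<..<v}. t * rec_cond_density F f k r u v t)"

end

theory Submission
  imports Defs
begin

text \<open>
  Write \<open>R = -ln(1 - F)\<close>.  For \<open>r = 1\<close> the conditional density of \<open>X(n)\<close> is the Stieltjes
  derivative of \<open>W(t) = ((R t - R u)/(R v - R u))\<^sup>k\<close>, so integration by parts gives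
  \<open>E[X(n) | \<dots>] = v - \<integral>\<^sub>u\<^sup>v W(t) dt\<close> (\<open>cond_exp_formula\<close>).
  Sufficiency: for the exponential law \<open>R\<close> is affine and this integral is \<open>(v - u)/(k + 1)\<close>.
  Necessity: the regression turns the formula into \<open>\<integral>\<^sub>u\<^sup>v (R t - R u)\<^sup>k dt = (v - u)(R v - R u)\<^sup>k/(k + 1)\<close>
  for all \<open>u < v\<close> in the support; differentiating in \<open>v\<close> shows that the chord slopes
  \<open>(R v - R u)/(v - u)\<close> do not depend on \<open>v\<close>, so \<open>R\<close> is affine with positive slope on the support.
  Nonnegativity of \<open>R\<close> and continuity of \<open>F\<close> then force \<open>l\<^sub>F > -\<infinity>\<close>, \<open>r\<^sub>F = \<infinity>\<close> and
  \<open>F(x) = 1 - exp(-c (x - l\<^sub>F))\<close>.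
\<close>

lemma decreasing_by_short_steps:
  fixes g :: "real \<Rightarrow> real"
  assumes eta: "\<eta> > 0" and uv: "u \<le> v"
    and step: "\<And>a b. u \<le> a \<Longrightarrow> a \<le> b \<Longrightarrow> b \<le> v \<Longrightarrow> b - a < \<eta> \<Longrightarrow> g b \<le> g a"
  shows "g v \<le> g u"
proof -
  have reach: "g b \<le> g u" if "u \<le> b" "b \<le> v" "b - u \<le> real m * (\<eta> / 2)" for m b
    using that
  proof (induction m arbitrary: b)
    case 0
    then show ?case by simp
  next
    case (Suc m)
    show ?case
    proof (cases "b - u \<le> real m * (\<eta> / 2)")
      case True
      then show ?thesis using Suc by blast
    next
      case False
      define a where "a = u + real m * (\<eta> / 2)"
      have a: "u \<le> a" "a \<le> b" "b - a < \<eta>"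
        using eta False Suc.prems by (auto simp: a_def algebra_simps)
      then have "g b \<le> g a" using step Suc.prems by simp
      also have "g a \<le> g u" using Suc.IH[of a] a Suc.prems by (simp add: a_def)
      finally show ?thesis .
    qed
  qed
  obtain m where "(v - u) / (\<eta> / 2) \<le> real m" using real_arch_simple by blast
  then have "v - u \<le> real m * (\<eta> / 2)" using eta by (simp add: divide_le_eq)
  then show ?thesis using reach uv by simp
qed

text \<open>This replaces differentiation in the
  two Stieltjes-type identities below, where the density need not be continuous.\<close>
lemma eq_if_small_increments:
  fixes \<Phi> W :: "real \<Rightarrow> real"
  assumes uv: "u \<le> v"
    and small: "\<And>e. e > 0 \<Longrightarrow> \<exists>\<eta>>0. \<forall>a b. u \<le> a \<longrightarrow> a \<le> b \<longrightarrow> b \<le> v \<longrightarrow> b - a < \<eta> \<longrightarrow>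
                    \<bar>\<Phi> b - \<Phi> a\<bar> \<le> e * (W b - W a)"
  shows "\<Phi> v = \<Phi> u"
proof -
  have bound: "\<bar>\<Phi> v - \<Phi> u\<bar> \<le> e * (W v - W u)" if e: "e > 0" for e
  proof -
    obtain \<eta> where eta: "\<eta> > 0" and step: "\<And>a b. u \<le> a \<Longrightarrow> a \<le> b \<Longrightarrow> b \<le> v \<Longrightarrow> b - a < \<eta> \<Longrightarrow>
        \<bar>\<Phi> b - \<Phi> a\<bar> \<le> e * (W b - W a)"
      using small[OF e] by blast
    have "(\<lambda>x. \<Phi> x - e * W x) v \<le> (\<lambda>x. \<Phi> x - e * W x) u"
      by (rule decreasing_by_short_steps[OF eta uv]) (use step in \<open>fastforce simp: abs_le_iff algebra_simps\<close>)
    moreover have "(\<lambda>x. - \<Phi> x - e * W x) v \<le> (\<lambda>x. - \<Phi> x - e * W x) u"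
      by (rule decreasing_by_short_steps[OF eta uv]) (use step in \<open>fastforce simp: abs_le_iff algebra_simps\<close>)
    ultimately show ?thesis by (simp add: abs_le_iff algebra_simps)
  qed
  have "\<bar>\<Phi> v - \<Phi> u\<bar> \<le> 0"
  proof (cases "W v - W u > 0")
    case True
    show ?thesis
    proof (rule field_le_epsilon)
      fix \<epsilon> :: real assume "\<epsilon> > 0"
      then show "\<bar>\<Phi> v - \<Phi> u\<bar> \<le> 0 + \<epsilon>"
        using bound[of "\<epsilon> / (W v - W u)"] True by simp
    qed
  next
    case False
    then show ?thesis using bound[of 1] by simp
  qed
  then show ?thesis by simp
qed

lemma set_integral_Ioc_split:
  fixes g :: "real \<Rightarrow> real"
  assumes "set_integrable lborel {u<..a} g" "set_integrable lborel {a<..b} g" "u \<le> a" "a \<le> b"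
  shows "(LBINT t:{u<..b}. g t) = (LBINT t:{u<..a}. g t) + (LBINT t:{a<..b}. g t)"
proof -
  have "{u<..b} = {u<..a} \<union> {a<..b}" using assms by auto
  then show ?thesis using set_integral_Un[of "{u<..a}" "{a<..b}" lborel g] assms by auto
qed

lemma set_integral_ignore_endpoints:
  fixes g :: "real \<Rightarrow> real"
  assumes int: "set_integrable lborel S g" and sub: "A \<subseteq> S" "B \<subseteq> S"
    and meas: "A \<in> sets borel" "B \<in> sets borel"
    and same: "A - {a, b} = B - {a, b}"
  shows "(LBINT t:A. g t) = (LBINT t:B. g t)"
proof (rule set_integral_cong_set)
  have "set_borel_measurable lborel C g" if "C \<subseteq> S" "C \<in> sets borel" for C
    using set_integrable_subset[OF int _ that(1)] that(2)
    unfolding set_integrable_def set_borel_measurable_def by (simp add: borel_measurable_integrable)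
  then show "set_borel_measurable lborel A g" "set_borel_measurable lborel B g"
    using sub meas by auto
  show "AE x in lborel. (x \<in> B) = (x \<in> A)"
    using AE_lborel_singleton[of a] AE_lborel_singleton[of b]
    by eventually_elim (use same in blast)
qed

lemma set_integrable_continuous_times:
  fixes h w :: "real \<Rightarrow> real"
  assumes h_cont: "continuous_on {u..v} h" and sub: "u \<le> a" "b \<le> v"
    and w_int: "set_integrable lborel {a<..b} w"
  shows "set_integrable lborel {a<..b} (\<lambda>t. h t * w t)"
proof -
  obtain B where B: "\<And>t. t \<in> {u..v} \<Longrightarrow> norm (h t) \<le> B"
    using compact_imp_bounded[OF compact_continuous_image[OF h_cont compact_Icc]]
    unfolding bounded_iff by (metis atLeastAtMost_iff image_eqI)
  show ?thesis
  proof (rule set_integrable_bound[where f="\<lambda>t. B * \<bar>w t\<bar>"])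
    show "set_integrable lborel {a<..b} (\<lambda>t. B * \<bar>w t\<bar>)"
      using set_integrable_abs[OF w_int] by (rule set_integrable_mult_right)
    have "(\<lambda>t. indicator {u..v} t *\<^sub>R h t) \<in> borel_measurable borel"
      by (rule borel_measurable_continuous_on_indicator) (auto simp: h_cont)
    moreover have "(\<lambda>t. indicator {a<..b} t *\<^sub>R w t) \<in> borel_measurable lborel"
      using w_int unfolding set_integrable_def by (rule borel_measurable_integrable)
    ultimately have "(\<lambda>t. (indicator {u..v} t *\<^sub>R h t) * (indicator {a<..b} t *\<^sub>R w t)) \<in> borel_measurable lborel"
      by measurable
    moreover have "(\<lambda>t. (indicator {u..v} t *\<^sub>R h t) * (indicator {a<..b} t *\<^sub>R w t)) =
        (\<lambda>t. indicator {a<..b} t *\<^sub>R (h t * w t))"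
      using sub by (auto simp: indicator_def fun_eq_iff)
    ultimately show "set_borel_measurable lborel {a<..b} (\<lambda>t. h t * w t)"
      unfolding set_borel_measurable_def by simp
    show "AE t in lborel. t \<in> {a<..b} \<longrightarrow> norm (h t * w t) \<le> norm (B * \<bar>w t\<bar>)"
    proof (intro AE_I2 impI)
      fix t assume "t \<in> {a<..b}"
      then have "\<bar>h t\<bar> \<le> \<bar>B\<bar>" using B[of t] sub by force
      then show "norm (h t * w t) \<le> norm (B * \<bar>w t\<bar>)"
        by (simp add: abs_mult mult_right_mono)
    qed
  qed
qed

lemma integral_by_parts_monotone:
  fixes w W :: "real \<Rightarrow> real"
  assumes uv: "u \<le> v"
    and W_cont: "continuous_on {u..v} W"
    and W_mono: "\<And>a b. u \<le> a \<Longrightarrow> a \<le> b \<Longrightarrow> b \<le> v \<Longrightarrow> W a \<le> W b"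
    and w_nonneg: "\<And>t. t \<in> {u<..v} \<Longrightarrow> w t \<ge> 0"
    and w_int: "\<And>a b. u \<le> a \<Longrightarrow> a \<le> b \<Longrightarrow> b \<le> v \<Longrightarrow> set_integrable lborel {a<..b} w"
    and w_W: "\<And>a b. u \<le> a \<Longrightarrow> a \<le> b \<Longrightarrow> b \<le> v \<Longrightarrow> (LBINT t:{a<..b}. w t) = W b - W a"
  shows "set_integrable lborel {u<..v} (\<lambda>t. t * w t)"
    and "(LBINT t:{u<..v}. t * w t) = v * W v - u * W u - (LBINT t:{u<..v}. W t)"
proof -
  have tw_int: "set_integrable lborel {a<..b} (\<lambda>t. t * w t)"
    if ab: "u \<le> a" "a \<le> b" "b \<le> v" for a b
    using set_integrable_continuous_times[OF continuous_on_id ab(1,3) w_int[OF ab]] by simp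
  then show "set_integrable lborel {u<..v} (\<lambda>t. t * w t)" using uv by simp
  have W_int: "set_integrable lborel {a<..b} W" if "u \<le> a" "b \<le> v" for a b
    by (rule set_integrable_subset[OF borel_integrable_atLeastAtMost'[OF W_cont]]) (use that in auto)
  define \<Phi> where "\<Phi> x = (LBINT t:{u<..x}. t * w t) - x * W x + (LBINT t:{u<..x}. W t)" for x
  have increment: "\<bar>\<Phi> b - \<Phi> a\<bar> \<le> (b - a) * (W b - W a)" if ab: "u \<le> a" "a \<le> b" "b \<le> v" for a b
  proof -
    have "\<Phi> b - \<Phi> a = (LBINT t:{a<..b}. t * w t) - b * W b + a * W a + (LBINT t:{a<..b}. W t)"
      unfolding \<Phi>_def
      using set_integral_Ioc_split[OF tw_int tw_int, of u a b] set_integral_Ioc_split[OF W_int W_int, of u a b] ab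
      by simp
    moreover have "a * (W b - W a) \<le> (LBINT t:{a<..b}. t * w t)"
      using set_integral_mono[OF set_integrable_mult_right[OF w_int[OF ab]] tw_int[OF ab], of a]
        w_nonneg ab by (simp add: w_W[OF ab] mult_right_mono)
    moreover have "(LBINT t:{a<..b}. t * w t) \<le> b * (W b - W a)"
      using set_integral_mono[OF tw_int[OF ab] set_integrable_mult_right[OF w_int[OF ab]], of b]
        w_nonneg ab by (simp add: w_W[OF ab] mult_right_mono)
    moreover have "W a * (b - a) \<le> (LBINT t:{a<..b}. W t)" "(LBINT t:{a<..b}. W t) \<le> W b * (b - a)"
      using set_integral_mono[of lborel "{a<..b}" "\<lambda>_. W a" W]
        set_integral_mono[of lborel "{a<..b}" W "\<lambda>_. W b"] W_int[of a b] W_mono ab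
      by (auto simp: set_integral_const set_integrable_def mult.commute)
    ultimately show ?thesis by (simp add: abs_le_iff algebra_simps)
  qed
  have "\<Phi> v = \<Phi> u"
  proof (rule eq_if_small_increments[OF uv, where W = W])
    fix e :: real assume "e > 0"
    show "\<exists>\<eta>>0. \<forall>a b. u \<le> a \<longrightarrow> a \<le> b \<longrightarrow> b \<le> v \<longrightarrow> b - a < \<eta> \<longrightarrow>
                    \<bar>\<Phi> b - \<Phi> a\<bar> \<le> e * (W b - W a)"
    proof (intro exI[of _ e] conjI allI impI \<open>e > 0\<close>)
      fix a b assume ab: "u \<le> a" "a \<le> b" "b \<le> v" "b - a < e"
      have "(b - a) * (W b - W a) \<le> e * (W b - W a)"
        using ab W_mono[OF ab(1-3)] by (intro mult_right_mono) auto
      then show "\<bar>\<Phi> b - \<Phi> a\<bar> \<le> e * (W b - W a)"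
        using increment[OF ab(1-3)] by linarith
    qed
  qed
  then show "(LBINT t:{u<..v}. t * w t) = v * W v - u * W u - (LBINT t:{u<..v}. W t)"
    unfolding \<Phi>_def by (simp add: set_lebesgue_integral_def)
qed

lemma power_integral_Ioc:
  fixes u v :: real and k :: nat
  assumes uv: "u < v"
  shows "(LBINT t:{u<..v}. ((t - u) / (v - u)) ^ k) = (v - u) / (real k + 1)"
proof -
  define G where "G t = (v - u) / (real k + 1) * ((t - u) / (v - u)) ^ (k + 1)" for t
  have cont: "continuous_on {u..v} (\<lambda>t. ((t - u) / (v - u)) ^ k)"
    by (intro continuous_intros) (use uv in auto)
  have G_deriv: "(G has_real_derivative ((t - u) / (v - u)) ^ k) (at t)" for t
  proof -
    have "((\<lambda>t. (t - u) / (v - u)) has_real_derivative 1 / (v - u)) (at t)"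
      using uv by (auto intro!: derivative_eq_intros)
    from DERIV_cmult[OF DERIV_power[OF this, of "k + 1"], of "(v - u) / (real k + 1)"]
    have "(G has_real_derivative
        (v - u) / (real k + 1) * (real (k + 1) * (1 / (v - u) * ((t - u) / (v - u)) ^ k))) (at t)"
      unfolding G_def by simp
    moreover have "(v - u) / (real k + 1) * (real (k + 1) * (1 / (v - u) * y)) = y" for y
      using uv by (simp add: divide_simps)
    ultimately show ?thesis by simp
  qed
  have "(LBINT t:{u..v}. ((t - u) / (v - u)) ^ k) = G v - G u"
    unfolding set_lebesgue_integral_def
    by (rule integral_FTC_atLeastAtMost[OF less_imp_le[OF uv] _ cont])
       (simp add: has_real_derivative_iff_has_vector_derivative[symmetric] has_field_derivative_at_within[OF G_deriv])
  also have "\<dots> = (v - u) / (real k + 1)" unfolding G_def using uv by simp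
  finally have "(LBINT t:{u..v}. ((t - u) / (v - u)) ^ k) = (v - u) / (real k + 1)" .
  moreover have "(LBINT t:{u<..v}. ((t - u) / (v - u)) ^ k) = (LBINT t:{u..v}. ((t - u) / (v - u)) ^ k)"
    by (rule set_integral_ignore_endpoints[OF borel_integrable_atLeastAtMost'[OF cont], of _ _ u v]) auto
  ultimately show ?thesis by simp
qed

lemma DERIV_ratio_power_zero:
  fixes J :: "real \<Rightarrow> real" and k :: nat
  assumes J_deriv: "(J has_real_derivative g) (at x)" and xu: "x \<noteq> u"
    and euler: "(x - u) * g = (real k + 1) * J x"
  shows "((\<lambda>x. J x / (x - u) ^ (k + 1)) has_real_derivative 0) (at x)"
proof -
  have "((\<lambda>x. x - u) has_real_derivative 1) (at x)"
    by (auto intro!: derivative_eq_intros)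
  from DERIV_power[OF this, of "k + 1"]
  have "((\<lambda>x. (x - u) ^ (k + 1)) has_real_derivative real (k + 1) * (x - u) ^ k) (at x)"
    by simp
  from DERIV_quotient[OF J_deriv this] xu
  have deriv: "((\<lambda>x. J x / (x - u) ^ (k + 1)) has_real_derivative
      (g * (x - u) ^ (k + 1) - real (k + 1) * (x - u) ^ k * J x) / ((x - u) ^ (k + 1)) ^ 2) (at x)"
    by (simp add: eval_nat_numeral)
  have "g * (x - u) ^ (k + 1) = (x - u) ^ k * ((x - u) * g)"
    by (simp add: power_add)
  then have numerator: "g * (x - u) ^ (k + 1) - real (k + 1) * (x - u) ^ k * J x = 0"
    unfolding euler by (simp add: algebra_simps)
  show ?thesis using deriv unfolding numerator by simp
qed

lemma slope_const_of_power_integral: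
  fixes \<phi> :: "real \<Rightarrow> real" and k :: nat
  assumes k: "1 \<le> k" and ord: "u < v1" "v1 < v2"
    and cont: "continuous_on {u..v2} \<phi>" and nonneg: "\<And>t. t \<in> {u..v2} \<Longrightarrow> 0 \<le> \<phi> t"
    and area: "\<And>x. x \<in> {v1..v2} \<Longrightarrow>
                 integral {u..x} (\<lambda>t. \<phi> t ^ k) = (x - u) / (real k + 1) * \<phi> x ^ k"
  shows "\<phi> v1 / (v1 - u) = \<phi> v2 / (v2 - u)"
proof -
  define J where "J x = integral {u..x} (\<lambda>t. \<phi> t ^ k)" for x
  define ratio where "ratio x = J x / (x - u) ^ (k + 1)" for x
  have pow_cont: "continuous_on {u..v2} (\<lambda>t. \<phi> t ^ k)"
    using cont by (intro continuous_intros)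
  have J_cont: "continuous_on {u..v2} J"
    unfolding J_def by (rule indefinite_integral_continuous_1[OF integrable_continuous_real[OF pow_cont]])
  have J_deriv: "(J has_real_derivative \<phi> x ^ k) (at x)" if "u < x" "x < v2" for x
  proof -
    have "(J has_vector_derivative \<phi> x ^ k) (at x within {u..v2})"
      unfolding J_def by (rule integral_has_vector_derivative[OF pow_cont]) (use that in auto)
    moreover have "at x within {u..v2} = at x" by (rule at_within_interior) (use that in auto)
    ultimately show ?thesis by (simp add: has_real_derivative_iff_has_vector_derivative)
  qed
  have ratio_deriv: "(ratio has_real_derivative 0) (at x)" if "v1 < x" "x < v2" for x
    unfolding ratio_def
  proof (rule DERIV_ratio_power_zero[OF J_deriv])
    show "(x - u) * \<phi> x ^ k = (real k + 1) * J x"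
      using area[of x] that by (simp add: J_def field_simps)
  qed (use that ord in auto)
  have "continuous_on {v1..v2} ratio"
    unfolding ratio_def using ord
    by (intro continuous_intros continuous_on_subset[OF J_cont]) auto
  then have "ratio v2 = ratio v1" by (rule DERIV_isconst_end[OF ord(2) _ ratio_deriv])
  moreover have "ratio x = (\<phi> x / (x - u)) ^ k / (real k + 1)" if "x \<in> {v1..v2}" for x
  proof -
    have "x - u \<noteq> 0" using that ord by simp
    then show ?thesis
      unfolding ratio_def J_def area[OF that] by (simp add: power_divide divide_simps)
  qed
  ultimately have "(\<phi> v1 / (v1 - u)) ^ k = (\<phi> v2 / (v2 - u)) ^ k"
    using ord by (simp add: add_nonneg_eq_0_iff)
  moreover have "\<phi> v1 / (v1 - u) \<ge> 0" "\<phi> v2 / (v2 - u) \<ge> 0" using nonneg ord by auto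
  ultimately show ?thesis using k power_eq_iff_eq_base[of k] by auto
qed

lemma isCont_zero_from_left:
  fixes g :: "real \<Rightarrow> real"
  assumes "isCont g x" "b < x" "\<And>y. b < y \<Longrightarrow> y < x \<Longrightarrow> g y = 0"
  shows "g x = 0"
proof -
  have "(g \<longlongrightarrow> g x) (at_left x)"
    using assms(1) unfolding isCont_def by (rule tendsto_within_subset) auto
  moreover have "\<forall>\<^sub>F y in at_left x. g y \<in> {0}"
    using eventually_at_left_real[OF assms(2)] by eventually_elim (use assms(3) in auto)
  ultimately have "g x \<in> {0}" by (intro Lim_in_closed_set) auto
  then show ?thesis by simp
qed

lemma isCont_zero_from_right:
  fixes g :: "real \<Rightarrow> real"
  assumes "isCont g x" "x < b" "\<And>y. x < y \<Longrightarrow> y < b \<Longrightarrow> g y = 0"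
  shows "g x = 0"
proof -
  have "(g \<longlongrightarrow> g x) (at_right x)"
    using assms(1) unfolding isCont_def by (rule tendsto_within_subset) auto
  moreover have "\<forall>\<^sub>F y in at_right x. g y \<in> {0}"
    using eventually_at_right_real[OF assms(2)] by eventually_elim (use assms(3) in auto)
  ultimately have "g x \<in> {0}" by (intro Lim_in_closed_set) auto
  then show ?thesis by simp
qed

lemma lF_le: "0 < F x \<Longrightarrow> lF F \<le> ereal x"
  unfolding lF_def by (rule Inf_lower) auto

lemma F_eq_0_below_lF:
  assumes "\<And>x. 0 \<le> F x" and "ereal x < lF F"
  shows "F x = 0"
proof -
  have "\<not> 0 < F x" using lF_le[of F x] assms(2) by auto
  then show ?thesis using assms(1)[of x] by linarith
qed

lemma rF_ge: "F x < 1 \<Longrightarrow> ereal x \<le> rF F"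
  unfolding rF_def by (rule Sup_upper) auto

lemma F_less_1_below_rF:
  assumes "mono F" and "ereal x < rF F"
  shows "F x < 1"
proof -
  obtain y where "F y < 1" "x < y"
    using assms(2) unfolding rF_def less_Sup_iff by auto
  then show ?thesis using monoD[OF assms(1), of x y] by simp
qed

lemma F_eq_1_above_rF:
  assumes "\<And>x. F x \<le> 1" and "rF F < ereal x"
  shows "F x = 1"
proof -
  have "\<not> F x < 1" using rF_ge[of F x] assms(2) by auto
  then show ?thesis using assms(1)[of x] by linarith
qed

lemma F_eq_recR: "F x < 1 \<Longrightarrow> F x = 1 - exp (- recR F x)"
  unfolding recR_def by simp

lemma abs_le_of_bounds:
  fixes I c d D :: real
  assumes "I \<le> (c + d) * D" "(c - d) * D \<le> I"
  shows "\<bar>I - c * D\<bar> \<le> d * D"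
  using assms by (simp add: abs_le_iff algebra_simps)

locale cdf_with_density =
  fixes f F :: "real \<Rightarrow> real"
  assumes density_nonneg: "\<And>x. 0 \<le> f x"
    and density_borel: "f \<in> borel_measurable borel"
    and density_integrable: "\<And>a b. set_integrable lborel {a<..b} f"
    and cdf_increment: "\<And>a b. a \<le> b \<Longrightarrow> (LBINT t:{a<..b}. f t) = F b - F a"
    and cdf_continuous: "\<And>x. isCont F x"
    and cdf_at_bot: "(F \<longlongrightarrow> 0) at_bot"
    and cdf_at_top: "(F \<longlongrightarrow> 1) at_top"
begin

lemma cdf_mono: "mono F"
proof (rule monoI)
  fix a b :: real assume "a \<le> b"
  have "0 \<le> (LBINT t:{a<..b}. f t)"
    unfolding set_lebesgue_integral_def
    by (rule integral_nonneg_AE) (simp add: density_nonneg)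
  then show "F a \<le> F b" using cdf_increment[OF \<open>a \<le> b\<close>] by simp
qed

lemma cdf_nonneg: "0 \<le> F x"
proof (rule tendsto_upperbound[OF cdf_at_bot])
  show "\<forall>\<^sub>F y in at_bot. F y \<le> F x"
    unfolding eventually_at_bot_linorder by (intro exI[of _ x]) (auto intro: monoD[OF cdf_mono])
qed simp

lemma cdf_le_1: "F x \<le> 1"
proof (rule tendsto_lowerbound[OF cdf_at_top])
  show "\<forall>\<^sub>F y in at_top. F x \<le> F y"
    unfolding eventually_at_top_linorder by (intro exI[of _ x]) (auto intro: monoD[OF cdf_mono])
qed simp

lemma cdf_continuous_on: "continuous_on S F"
  by (simp add: continuous_at_imp_continuous_on cdf_continuous)

lemma integral_density_close:
  fixes g :: "real \<Rightarrow> real"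
  assumes ab: "a \<le> b" and int: "set_integrable lborel {a<..b} (\<lambda>t. g t * f t)"
    and near: "\<And>t. t \<in> {a<..b} \<Longrightarrow> \<bar>g t - c\<bar> \<le> d"
  shows "\<bar>(LBINT t:{a<..b}. g t * f t) - c * (F b - F a)\<bar> \<le> d * (F b - F a)"
proof -
  have bounds: "c - d \<le> g t" "g t \<le> c + d" if "t \<in> {a<..b}" for t
    using near[OF that] unfolding abs_le_iff by linarith+
  have cf_int: "set_integrable lborel {a<..b} (\<lambda>t. e * f t)" for e
    using density_integrable by (rule set_integrable_mult_right)
  have cf_val: "(LBINT t:{a<..b}. e * f t) = e * (F b - F a)" for e
    using cdf_increment[OF ab] by (simp add: set_integral_mult_right)
  have "(LBINT t:{a<..b}. g t * f t) \<le> (LBINT t:{a<..b}. (c + d) * f t)"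
    using bounds density_nonneg by (intro set_integral_mono[OF int cf_int]) (auto intro!: mult_right_mono)
  moreover have "(LBINT t:{a<..b}. (c - d) * f t) \<le> (LBINT t:{a<..b}. g t * f t)"
    using bounds density_nonneg by (intro set_integral_mono[OF cf_int int]) (auto intro!: mult_right_mono)
  ultimately show ?thesis unfolding cf_val by (rule abs_le_of_bounds)
qed

text \<open>One step of the change of variables: on an interval \<open>(a,b]\<close> over which \<open>q\<close> stays within \<open>d\<close>
  of \<open>q(F a)\<close> on \<open>[F a, F b]\<close>, the integral of \<open>q(F t) f(t)\<close> and the increment of a primitive \<open>Q\<close>
  of \<open>q\<close> are both \<open>(q(F a) \<plusminus> d)(F b - F a)\<close>, by monotonicity of the integral and by the mean value
  theorem respectively.\<close>
lemma substitution_local_error: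
  fixes q Q :: "real \<Rightarrow> real"
  assumes ab: "a \<le> b"
    and int: "set_integrable lborel {a<..b} (\<lambda>t. q (F t) * f t)"
    and Q_deriv: "\<And>y. y \<in> {F a..F b} \<Longrightarrow> (Q has_real_derivative q y) (at y)"
    and near: "\<And>y. y \<in> {F a..F b} \<Longrightarrow> \<bar>q y - q (F a)\<bar> \<le> d"
  shows "\<bar>(LBINT t:{a<..b}. q (F t) * f t) - (Q (F b) - Q (F a))\<bar> \<le> 2 * d * (F b - F a)"
proof -
  have Fab: "F a \<le> F b" using monoD[OF cdf_mono ab] .
  have int_close:
    "\<bar>(LBINT t:{a<..b}. q (F t) * f t) - q (F a) * (F b - F a)\<bar> \<le> d * (F b - F a)"
    using integral_density_close[OF ab int, of "q (F a)" d] near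
      monoD[OF cdf_mono, of a] monoD[OF cdf_mono, of _ b] by force
  obtain z where z: "F a \<le> z" "z \<le> F b" "Q (F b) - Q (F a) = (F b - F a) * q z"
  proof (cases "F a < F b")
    case True
    with MVT2[OF True, of Q q] Q_deriv obtain z
      where "F a < z" "z < F b" "Q (F b) - Q (F a) = (F b - F a) * q z"
      by fastforce
    then show ?thesis using that[of z] by simp
  qed (use Fab that[of "F a"] in auto)
  have "\<bar>(q z - q (F a)) * (F b - F a)\<bar> = \<bar>q z - q (F a)\<bar> * (F b - F a)"
    using Fab by (simp add: abs_mult)
  also have "\<dots> \<le> d * (F b - F a)"
    using near[of z] z Fab by (intro mult_right_mono) auto
  finally have Q_close: "\<bar>(q z - q (F a)) * (F b - F a)\<bar> \<le> d * (F b - F a)" .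
  have "(LBINT t:{a<..b}. q (F t) * f t) - (Q (F b) - Q (F a)) =
        ((LBINT t:{a<..b}. q (F t) * f t) - q (F a) * (F b - F a)) - (q z - q (F a)) * (F b - F a)"
    unfolding z(3) by (simp add: algebra_simps)
  also have "\<bar>\<dots>\<bar> \<le> d * (F b - F a) + d * (F b - F a)"
    using abs_triangle_ineq4 int_close Q_close by (rule order_trans[OF _ add_mono])
  finally show ?thesis by simp
qed

text \<open>Change of variables \<open>y = F t\<close> for the Lebesgue--Stieltjes integral against \<open>dF = f dt\<close>:
  if \<open>Q' = q\<close> with \<open>q\<close> continuous, then \<open>\<integral>\<^sub>(\<^sub>u\<^sub>,\<^sub>v\<^sub>] q(F t) f(t) dt = Q(F v) - Q(F u)\<close>.
  No regularity of \<open>f\<close> beyond integrability is needed: uniform continuity of \<open>q\<close> and \<open>F\<close> makes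
  the local error of \<open>substitution_local_error\<close> small relative to the increment of \<open>F\<close>.\<close>
lemma substitution:
  fixes q Q :: "real \<Rightarrow> real"
  assumes uv: "u \<le> v"
    and q_cont: "continuous_on {F u..F v} q"
    and Q_deriv: "\<And>y. y \<in> {F u..F v} \<Longrightarrow> (Q has_real_derivative q y) (at y)"
  shows "set_integrable lborel {u<..v} (\<lambda>t. q (F t) * f t)"
    and "(LBINT t:{u<..v}. q (F t) * f t) = Q (F v) - Q (F u)"
proof -
  have F_between: "F u \<le> F a" "F a \<le> F b" "F b \<le> F v" if "u \<le> a" "a \<le> b" "b \<le> v" for a b
    using that by (auto intro: monoD[OF cdf_mono])
  have qF_cont: "continuous_on {u..v} (\<lambda>t. q (F t))"
    by (rule continuous_on_compose2[OF q_cont cdf_continuous_on]) (use F_between in force)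
  have int: "set_integrable lborel {a<..b} (\<lambda>t. q (F t) * f t)" if "u \<le> a" "b \<le> v" for a b
    using set_integrable_continuous_times[OF qF_cont that density_integrable] .
  then show "set_integrable lborel {u<..v} (\<lambda>t. q (F t) * f t)" by simp
  define \<Phi> where "\<Phi> x = (LBINT t:{u<..x}. q (F t) * f t) - Q (F x)" for x
  have "\<Phi> v = \<Phi> u"
  proof (rule eq_if_small_increments[OF uv, where W = F])
    fix e :: real assume e: "e > 0"
    obtain \<delta> where \<delta>: "\<delta> > 0" and q_close: "\<And>y y'. y \<in> {F u..F v} \<Longrightarrow> y' \<in> {F u..F v} \<Longrightarrow>
        \<bar>y' - y\<bar> < \<delta> \<Longrightarrow> \<bar>q y' - q y\<bar> < e / 2"
      using compact_uniformly_continuous[OF q_cont compact_Icc] e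
      unfolding uniformly_continuous_on_def dist_real_def by (metis half_gt_zero)
    obtain \<eta> where \<eta>: "\<eta> > 0" and F_close: "\<And>x x'. x \<in> {u..v} \<Longrightarrow> x' \<in> {u..v} \<Longrightarrow>
        \<bar>x' - x\<bar> < \<eta> \<Longrightarrow> \<bar>F x' - F x\<bar> < \<delta>"
      using compact_uniformly_continuous[OF cdf_continuous_on compact_Icc] \<delta>
      unfolding uniformly_continuous_on_def dist_real_def by metis
    show "\<exists>\<eta>>0. \<forall>a b. u \<le> a \<longrightarrow> a \<le> b \<longrightarrow> b \<le> v \<longrightarrow> b - a < \<eta> \<longrightarrow>
            \<bar>\<Phi> b - \<Phi> a\<bar> \<le> e * (F b - F a)"
    proof (intro exI[of _ \<eta>] conjI allI impI \<eta>)
      fix a b assume ab: "u \<le> a" "a \<le> b" "b \<le> v" "b - a < \<eta>"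
      note Fab = F_between[OF ab(1-3)]
      have near: "\<bar>q y - q (F a)\<bar> \<le> e / 2" if "y \<in> {F a..F b}" for y
        using q_close[of "F a" y] F_close[of a b] ab Fab that by force
      have "\<Phi> b - \<Phi> a = (LBINT t:{a<..b}. q (F t) * f t) - (Q (F b) - Q (F a))"
        unfolding \<Phi>_def using set_integral_Ioc_split[OF int int, of u a b] ab by simp
      also have "\<bar>\<dots>\<bar> \<le> 2 * (e / 2) * (F b - F a)"
        using substitution_local_error[OF ab(2) int[OF ab(1,3)] _ near] Q_deriv Fab by simp
      finally show "\<bar>\<Phi> b - \<Phi> a\<bar> \<le> e * (F b - F a)" by simp
    qed
  qed
  then show "(LBINT t:{u<..v}. q (F t) * f t) = Q (F v) - Q (F u)"
    unfolding \<Phi>_def by (simp add: set_lebesgue_integral_def)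
qed

lemma integral_by_parts_composed:
  fixes q Q :: "real \<Rightarrow> real"
  assumes uv: "u \<le> v"
    and q_cont: "continuous_on {F u..F v} q"
    and q_nonneg: "\<And>y. y \<in> {F u..F v} \<Longrightarrow> 0 \<le> q y"
    and Q_deriv: "\<And>y. y \<in> {F u..F v} \<Longrightarrow> (Q has_real_derivative q y) (at y)"
  shows "set_integrable lborel {u<..v} (\<lambda>t. t * (q (F t) * f t))"
    and "(LBINT t:{u<..v}. t * (q (F t) * f t)) =
           v * Q (F v) - u * Q (F u) - (LBINT t:{u<..v}. Q (F t))"
proof -
  have F_between: "F u \<le> F a" "F a \<le> F b" "F b \<le> F v" if "u \<le> a" "a \<le> b" "b \<le> v" for a b
    using that by (auto intro: monoD[OF cdf_mono])
  have sub: "set_integrable lborel {a<..b} (\<lambda>t. q (F t) * f t)"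
    "(LBINT t:{a<..b}. q (F t) * f t) = Q (F b) - Q (F a)"
    if ab: "u \<le> a" "a \<le> b" "b \<le> v" for a b
  proof -
    have "continuous_on {F a..F b} q"
      by (rule continuous_on_subset[OF q_cont]) (use F_between[OF ab] in auto)
    then show "set_integrable lborel {a<..b} (\<lambda>t. q (F t) * f t)"
      "(LBINT t:{a<..b}. q (F t) * f t) = Q (F b) - Q (F a)"
      using substitution[OF ab(2), of q Q] Q_deriv F_between[OF ab] by auto
  qed
  have "continuous_on {F u..F v} Q"
    using Q_deriv by (intro continuous_at_imp_continuous_on ballI DERIV_isCont) auto
  then have W_cont: "continuous_on {u..v} (\<lambda>t. Q (F t))"
    by (rule continuous_on_compose2[OF _ cdf_continuous_on]) (use F_between in force)
  have W_mono: "Q (F a) \<le> Q (F b)" if "u \<le> a" "a \<le> b" "b \<le> v" for a b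
  proof -
    have "0 \<le> (LBINT t:{a<..b}. q (F t) * f t)"
      unfolding set_lebesgue_integral_def
      using q_nonneg F_between that monoD[OF cdf_mono, of a] monoD[OF cdf_mono, of _ b]
      by (intro integral_nonneg_AE AE_I2) (auto simp: indicator_def density_nonneg)
    then show ?thesis using sub(2)[OF that] by simp
  qed
  have w_nonneg: "0 \<le> q (F t) * f t" if "t \<in> {u<..v}" for t
    using q_nonneg F_between[of t t] that density_nonneg by auto
  show "set_integrable lborel {u<..v} (\<lambda>t. t * (q (F t) * f t))"
    and "(LBINT t:{u<..v}. t * (q (F t) * f t)) =
           v * Q (F v) - u * Q (F u) - (LBINT t:{u<..v}. Q (F t))"
    using integral_by_parts_monotone[OF uv W_cont W_mono w_nonneg sub] by auto
qed

text \<open>The formula for the conditional mean: with \<open>r = 1\<close> the conditional density is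
  \<open>k R'(t) (R t - R u)\<^sup>k\<^sup>-\<^sup>1 / (R v - R u)\<^sup>k = d W(t)/dt\<close> with \<open>W(t) = ((R t - R u)/(R v - R u))\<^sup>k\<close>, a
  function of \<open>F(t)\<close>; integrating \<open>t dW(t)\<close> by parts gives \<open>v\<close> minus the integral of \<open>W\<close>.\<close>
lemma cond_exp_formula:
  fixes k :: nat
  assumes k: "1 \<le> k" and uv: "u < v" and Fv: "F v < 1" and Fuv: "F u < F v"
  shows "rec_cond_exp F f k 1 u v =
           v - (LBINT t:{u<..v}. ((recR F t - recR F u) / (recR F v - recR F u)) ^ k)"
proof -
  define D where "D = recR F v - recR F u"
  have D: "D > 0" unfolding D_def recR_def using Fuv Fv by simp
  define Q where "Q y = ((- ln (1 - y) - recR F u) / D) ^ k" for y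
  define q where "q y = real k * ((- ln (1 - y) - recR F u) / D) ^ (k - 1) * (1 / (1 - y) / D)" for y
  have F_lt1: "y < 1" if "y \<in> {F u..F v}" for y using that Fv by simp
  have Q_deriv: "(Q has_real_derivative q y) (at y)" if "y \<in> {F u..F v}" for y
  proof -
    have "((\<lambda>y. (- ln (1 - y) - recR F u) / D) has_real_derivative 1 / (1 - y) / D) (at y)"
      using F_lt1[OF that] D by (auto intro!: derivative_eq_intros simp: field_simps)
    from DERIV_power[OF this, of k] show ?thesis
      unfolding Q_def q_def by (simp add: algebra_simps)
  qed
  have q_nonneg: "0 \<le> q y" if "y \<in> {F u..F v}" for y
    unfolding q_def using that F_lt1[OF that] Fuv Fv D by (simp add: recR_def)
  have q_cont: "continuous_on {F u..F v} q"
    unfolding q_def using Fv D by (auto intro!: continuous_intros)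
  note parts = integral_by_parts_composed[OF less_imp_le[OF uv] q_cont q_nonneg Q_deriv]
  have Qv: "Q (F v) = 1" and Qu: "Q (F u) = 0"
    unfolding Q_def using D k by (simp_all add: D_def recR_def)
  have density: "t * rec_cond_density F f k 1 u v t = t * (q (F t) * f t)" for t
  proof -
    have fact_ratio: "fact (k + 1 - 1) / (fact (k - 1) * fact (1 - 1)) = (real k :: real)"
      using k by (cases k) auto
    show ?thesis
      unfolding rec_cond_density_def q_def D_def fact_ratio recR_def by (simp add: field_simps)
  qed
  have "rec_cond_exp F f k 1 u v = (LBINT t:{u<..<v}. t * (q (F t) * f t))"
    unfolding rec_cond_exp_def density ..
  also have "\<dots> = (LBINT t:{u<..v}. t * (q (F t) * f t))"
    by (rule set_integral_ignore_endpoints[OF parts(1), of _ _ u v]) auto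
  also have "\<dots> = v - (LBINT t:{u<..v}. Q (F t))" using parts(2) Qv Qu by simp
  finally show ?thesis unfolding Q_def D_def recR_def .
qed

text \<open>Sufficiency: for the shifted exponential law \<open>R\<close> is affine, so the normalised weight
  is \<open>((t - u)/(v - u))\<^sup>k\<close> and the conditional mean is \<open>(u + k v)/(k + 1)\<close>.\<close>
lemma cond_exp_of_exponential:
  fixes k :: nat
  assumes k: "1 \<le> k" and c: "c > 0"
    and exponential: "\<And>x. x \<ge> l0 \<Longrightarrow> F x = 1 - exp (- c * (x - l0))"
    and u: "l0 < u" and uv: "u < v"
  shows "rec_cond_exp F f k 1 u v = (u + real k * v) / (real k + 1)"
proof -
  have R: "recR F t = c * (t - l0)" if "t \<ge> l0" for t
    unfolding recR_def using exponential[OF that] by simp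
  have Fv: "F v < 1" and Fuv: "F u < F v"
    using exponential[of u] exponential[of v] u uv c by simp_all
  have "(LBINT t:{u<..v}. ((recR F t - recR F u) / (recR F v - recR F u)) ^ k) =
        (LBINT t:{u<..v}. ((t - u) / (v - u)) ^ k)" (is "?W = _")
  proof (rule set_lebesgue_integral_cong)
    show "\<forall>t. t \<in> {u<..v} \<longrightarrow>
        ((recR F t - recR F u) / (recR F v - recR F u)) ^ k = ((t - u) / (v - u)) ^ k"
      using R u uv c by (auto simp: right_diff_distrib[symmetric])
  qed simp
  also have "\<dots> = (v - u) / (real k + 1)" by (rule power_integral_Ioc[OF uv])
  finally have "?W = (v - u) / (real k + 1)" .
  with cond_exp_formula[OF k uv Fv Fuv]
  have "rec_cond_exp F f k 1 u v = v - (v - u) / (real k + 1)" by simp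
  then show ?thesis by (simp add: field_simps)
qed

lemma F_less_1_in_support: "ereal x < rF F \<Longrightarrow> F x < 1"
  by (rule F_less_1_below_rF[OF cdf_mono])

lemma recR_mono: "a \<le> b \<Longrightarrow> F b < 1 \<Longrightarrow> recR F a \<le> recR F b"
  using monoD[OF cdf_mono, of a b] by (simp add: recR_def)

lemma recR_less: "F a < F b \<Longrightarrow> F b < 1 \<Longrightarrow> recR F a < recR F b"
  by (simp add: recR_def)

lemma recR_nonneg: "F x < 1 \<Longrightarrow> 0 \<le> recR F x"
  using cdf_nonneg[of x] by (simp add: recR_def)

lemma isCont_recR: "F x < 1 \<Longrightarrow> isCont (recR F) x"
  unfolding recR_def using cdf_continuous[of x] by (auto intro!: continuous_intros)

text \<open>The support \<open>(l\<^sub>F, r\<^sub>F)\<close> of a continuous distribution is a non-empty open interval: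
  a median lies strictly inside it.\<close>
lemma interior_point: obtains u0 where "lF F < ereal u0" "ereal u0 < rF F"
proof -
  obtain a where a: "F a < 1/2"
    using order_tendstoD(2)[OF cdf_at_bot, of "1/2"] by (auto simp: eventually_at_bot_linorder)
  obtain b where b: "F b > 1/2"
    using order_tendstoD(1)[OF cdf_at_top, of "1/2"] by (auto simp: eventually_at_top_linorder)
  have "a \<le> b" using a b monoD[OF cdf_mono, of b a] by force
  then obtain u0 where u0: "F u0 = 1/2"
    using IVT[of F a "1/2" b] a b cdf_continuous by auto
  have "lF F < ereal u0"
  proof (rule ccontr)
    assume "\<not> lF F < ereal u0"
    then have "lF F = ereal u0" using lF_le[of F u0] u0 by simp
    then have "F y = 0" if "y < u0" for y using F_eq_0_below_lF[of F, OF cdf_nonneg] that by simp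
    then have "F u0 = 0" using isCont_zero_from_left[where g=F and x=u0 and b="u0 - 1", OF cdf_continuous] by simp
    then show False using u0 by simp
  qed
  moreover have "ereal u0 < rF F"
  proof (rule ccontr)
    assume "\<not> ereal u0 < rF F"
    then have "rF F = ereal u0" using rF_ge[of F u0] u0 by simp
    then have "F y - 1 = 0" if "u0 < y" for y using F_eq_1_above_rF[of F, OF cdf_le_1] that by simp
    then have "F u0 - 1 = 0"
      using isCont_zero_from_right[where g="\<lambda>y. F y - 1" and x=u0 and b="u0 + 1"] cdf_continuous[of u0]
      by simp
    then show False using u0 by simp
  qed
  ultimately show ?thesis by (rule that)
qed

text \<open>Consequences of an affine \<open>R = a x + b\<close> (\<open>a > 0\<close>) on the support.  Since \<open>R \<ge> 0\<close>, the support
  is bounded below.\<close>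
lemma lF_finite_of_affine_recR:
  assumes a: "a > 0"
    and affine: "\<And>x. lF F < ereal x \<Longrightarrow> ereal x < rF F \<Longrightarrow> recR F x = a * x + b"
  obtains l0 where "lF F = ereal l0"
proof -
  obtain u0 where u0: "lF F < ereal u0" "ereal u0 < rF F" by (rule interior_point)
  have "lF F \<noteq> -\<infinity>"
  proof
    assume "lF F = -\<infinity>"
    define x where "x = min u0 ((- 1 - b) / a)"
    have x_supp: "lF F < ereal x" "ereal x < rF F"
      using \<open>lF F = -\<infinity>\<close> le_less_trans[OF _ u0(2), of "ereal x"] by (auto simp: x_def)
    have "a * x + b \<le> -1" using a by (simp add: x_def min_def field_simps)
    moreover have "0 \<le> recR F x" using recR_nonneg F_less_1_in_support x_supp(2) by blast
    ultimately show False using affine[OF x_supp] by simp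
  qed
  then show ?thesis using that u0(1) by (cases "lF F") auto
qed

text \<open>Since \<open>R\<close> stays bounded near a finite \<open>r\<^sub>F\<close>, continuity would give \<open>F(r\<^sub>F) < 1\<close>, while \<open>F = 1\<close>
  to the right of \<open>r\<^sub>F\<close>; so the support is unbounded above.\<close>
lemma rF_infinite_of_affine_recR:
  assumes affine: "\<And>x. lF F < ereal x \<Longrightarrow> ereal x < rF F \<Longrightarrow> recR F x = a * x + b"
  shows "rF F = \<infinity>"
proof (rule ccontr)
  assume "rF F \<noteq> \<infinity>"
  obtain u0 where u0: "lF F < ereal u0" "ereal u0 < rF F" by (rule interior_point)
  then obtain r0 where r0: "rF F = ereal r0" using \<open>rF F \<noteq> \<infinity>\<close> by (cases "rF F") auto
  have "F r0 - 1 = 0"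
    using isCont_zero_from_right[where g="\<lambda>y. F y - 1" and x=r0 and b="r0 + 1"] cdf_continuous[of r0]
      F_eq_1_above_rF[of F, OF cdf_le_1] r0 by simp
  moreover have "F r0 - (1 - exp (- (a * r0 + b))) = 0"
  proof (rule isCont_zero_from_left[where g="\<lambda>y. F y - (1 - exp (- (a * y + b)))" and x=r0 and b=u0])
    show "isCont (\<lambda>y. F y - (1 - exp (- (a * y + b)))) r0"
      using cdf_continuous[of r0] by (intro continuous_intros)
    show "u0 < r0" using u0(2) r0 by simp
    fix y assume "u0 < y" "y < r0"
    then have "lF F < ereal y" "ereal y < rF F" using u0(1) r0 by (auto intro: less_trans)
    then show "F y - (1 - exp (- (a * y + b))) = 0"
      using affine[of y] F_eq_recR[of F y] F_less_1_in_support[of y] by simp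
  qed
  ultimately show False by simp
qed

text \<open>With \<open>F(l\<^sub>F) = 0\<close>, continuity of \<open>R\<close> at \<open>l\<^sub>F\<close> gives \<open>b = -a l\<^sub>F\<close>: \<open>F\<close> is the shifted exponential law.\<close>
lemma exponential_of_affine_recR:
  assumes a: "a > 0"
    and affine: "\<And>x. lF F < ereal x \<Longrightarrow> ereal x < rF F \<Longrightarrow> recR F x = a * x + b"
  shows "lF F > -\<infinity> \<and> rF F = \<infinity> \<and>
         (\<exists>c>0. \<forall>x. ereal x \<ge> lF F \<longrightarrow> F x = 1 - exp (- c * (x - real_of_ereal (lF F))))"
proof -
  obtain l0 where l0: "lF F = ereal l0" using lF_finite_of_affine_recR[OF a affine] by blast
  have r: "rF F = \<infinity>" using rF_infinite_of_affine_recR[OF affine] .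
  have F_l0: "F l0 = 0"
    using isCont_zero_from_left[where g=F and x=l0 and b="l0 - 1", OF cdf_continuous]
      F_eq_0_below_lF[of F, OF cdf_nonneg] l0 by simp
  have "recR F l0 - (a * l0 + b) = 0"
  proof (rule isCont_zero_from_right[where g="\<lambda>y. recR F y - (a * y + b)" and x=l0 and b="l0 + 1"])
    show "isCont (\<lambda>y. recR F y - (a * y + b)) l0"
      using isCont_recR F_l0 by (intro continuous_intros) simp
    fix y assume "l0 < y"
    then show "recR F y - (a * y + b) = 0" using affine l0 r by simp
  qed simp
  then have b: "b = - a * l0" using F_l0 by (simp add: recR_def)
  have "F x = 1 - exp (- a * (x - l0))" if "l0 \<le> x" for x
  proof (cases "x = l0")
    case False
    then have "lF F < ereal x" "ereal x < rF F" using that l0 r by auto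
    then have "recR F x = a * (x - l0)" using affine b by (simp add: algebra_simps)
    then show ?thesis using F_eq_recR[of F x] F_less_1_in_support \<open>ereal x < rF F\<close> by simp
  qed (simp add: F_l0)
  then show ?thesis using a l0 r by auto
qed

context
  fixes k :: nat
  assumes k: "1 \<le> k"
    and regression: "\<And>u v. lF F < ereal u \<Longrightarrow> u < v \<Longrightarrow> ereal v < rF F \<Longrightarrow>
                       rec_cond_exp F f k 1 u v = (u + real k * v) / (real k + 1)"
begin

text \<open>If \<open>F\<close> were flat on \<open>[u,v]\<close>, the conditional density would vanish and the regression
  would force \<open>u + k w = 0\<close> for every \<open>w \<in> (u,v]\<close>, which is absurd.\<close>
lemma F_strict_in_support:
  assumes "lF F < ereal u" "u < v" "ereal v < rF F"
  shows "F u < F v"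
proof (rule ccontr)
  assume "\<not> F u < F v"
  then have flat: "F u = F v" using monoD[OF cdf_mono, of u v] assms(2) by simp
  have "u + real k * w = 0" if "u < w" "w \<le> v" for w
  proof -
    have "F w = F u" using monoD[OF cdf_mono, of u w] monoD[OF cdf_mono, of w v] that flat by simp
    then have "rec_cond_exp F f k 1 u w = 0"
      unfolding rec_cond_exp_def rec_cond_density_def recR_def by simp
    moreover have "ereal w < rF F"
      using le_less_trans[OF _ assms(3), of "ereal w"] that(2) by simp
    ultimately have "(u + real k * w) / (real k + 1) = 0" using regression assms(1) that(1) by simp
    then show ?thesis by (simp add: add_nonneg_eq_0_iff)
  qed
  from this[of "(u + v) / 2"] this[of v] assms(2)
  have "u + real k * ((u + v) / 2) = 0" "u + real k * v = 0" by simp_all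
  moreover have "real k * (v - u) = 2 * ((u + real k * v) - (u + real k * ((u + v) / 2)))"
    by (simp add: algebra_simps)
  ultimately have "real k * (v - u) = 0" by simp
  then show False using k assms(2) by simp
qed

text \<open>The regression identity, rewritten with \<open>cond_exp_formula\<close>: the integral of
  \<open>(R t - R u)\<^sup>k\<close> over \<open>(u,v]\<close> is the one of a straight line through \<open>(u,0)\<close> and \<open>(v, R v - R u)\<close>.\<close>
lemma power_integral_identity:
  assumes uv: "lF F < ereal u" "u < v" "ereal v < rF F"
  shows "(LBINT t:{u<..v}. (recR F t - recR F u) ^ k) =
           (v - u) / (real k + 1) * (recR F v - recR F u) ^ k"
proof -
  define D where "D = recR F v - recR F u"
  have Fv: "F v < 1" and Fuv: "F u < F v"
    using F_less_1_in_support F_strict_in_support uv by auto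
  have D: "D > 0" using recR_less[OF Fuv Fv] unfolding D_def by simp
  have "(LBINT t:{u<..v}. ((recR F t - recR F u) / D) ^ k) =
        (LBINT t:{u<..v}. (recR F t - recR F u) ^ k) / D ^ k"
    by (simp add: power_divide)
  moreover have "(LBINT t:{u<..v}. ((recR F t - recR F u) / D) ^ k) = v - (u + real k * v) / (real k + 1)"
    using cond_exp_formula[OF k uv(2) Fv Fuv] regression[OF uv] unfolding D_def by simp
  moreover have "v - (u + real k * v) / (real k + 1) = (v - u) / (real k + 1)"
    by (simp add: field_simps)
  ultimately show ?thesis using D unfolding D_def by (simp add: field_simps)
qed

text \<open>Differentiating the identity in its upper end point shows that, seen from any point \<open>u\<close>
  of the support, all chords of \<open>R\<close> to the right of \<open>u\<close> have the same slope.\<close>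
lemma chord_slope_const:
  assumes u: "lF F < ereal u" and x: "u < x" "ereal x < rF F" and y: "u < y" "ereal y < rF F"
  shows "(recR F x - recR F u) / (x - u) = (recR F y - recR F u) / (y - u)"
proof -
  have ordered: "(recR F v1 - recR F u) / (v1 - u) = (recR F v2 - recR F u) / (v2 - u)"
    if v: "u < v1" "v1 < v2" "ereal v2 < rF F" for v1 v2
  proof (rule slope_const_of_power_integral[where \<phi>="\<lambda>t. recR F t - recR F u", OF k v(1,2)])
    have F_lt1: "F t < 1" if "t \<le> v2" for t
      using monoD[OF cdf_mono that] F_less_1_in_support[OF v(3)] by simp
    show cont: "continuous_on {u..v2} (\<lambda>t. recR F t - recR F u)"
      by (intro continuous_at_imp_continuous_on ballI continuous_intros isCont_recR F_lt1) auto
    show "\<And>t. t \<in> {u..v2} \<Longrightarrow> 0 \<le> recR F t - recR F u"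
      using recR_mono F_lt1 by auto
    fix z assume z: "z \<in> {v1..v2}"
    have z_supp: "ereal z < rF F" using le_less_trans[OF _ v(3), of "ereal z"] z by simp
    have "continuous_on {u..z} (\<lambda>t. (recR F t - recR F u) ^ k)"
      using continuous_on_subset[OF cont, of "{u..z}"] z by (auto intro: continuous_on_power)
    then have int: "set_integrable lborel {u..z} (\<lambda>t. (recR F t - recR F u) ^ k)"
      by (rule borel_integrable_atLeastAtMost')
    have "integral {u..z} (\<lambda>t. (recR F t - recR F u) ^ k) = (LBINT t:{u..z}. (recR F t - recR F u) ^ k)"
      using set_borel_integral_eq_integral(2)[OF int] by simp
    also have "\<dots> = (LBINT t:{u<..z}. (recR F t - recR F u) ^ k)"
      by (rule set_integral_ignore_endpoints[OF int, of _ _ u z]) auto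
    also have "\<dots> = (z - u) / (real k + 1) * (recR F z - recR F u) ^ k"
      using power_integral_identity[OF u _ z_supp] z v by simp
    finally show "integral {u..z} (\<lambda>t. (recR F t - recR F u) ^ k) =
        (z - u) / (real k + 1) * (recR F z - recR F u) ^ k" .
  qed
  show ?thesis
  proof (cases x y rule: linorder_cases)
    case less
    then show ?thesis using ordered x y by simp
  next
    case greater
    then show ?thesis using ordered x y by simp
  qed simp
qed

lemma recR_affine:
  obtains a b where "a > 0" "\<And>x. lF F < ereal x \<Longrightarrow> ereal x < rF F \<Longrightarrow> recR F x = a * x + b"
proof -
  obtain u0 where u0: "lF F < ereal u0" "ereal u0 < rF F" by (rule interior_point)
  obtain v0 where v0: "u0 < v0" "ereal v0 < rF F"
    using ereal_dense2[OF u0(2)] by (metis ereal_less_eq(3) less_ereal.simps(1))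
  define a where "a = (recR F v0 - recR F u0) / (v0 - u0)"
  have "recR F u0 < recR F v0"
    using recR_less F_strict_in_support[OF u0(1) v0] F_less_1_in_support[OF v0(2)] by blast
  then have a: "a > 0" unfolding a_def using v0 by simp
  have "recR F x = recR F u0 + a * (x - u0)" if x: "lF F < ereal x" "ereal x < rF F" for x
  proof (cases x u0 rule: linorder_cases)
    case greater
    then have "(recR F x - recR F u0) / (x - u0) = a"
      unfolding a_def using chord_slope_const[OF u0(1) _ x(2) v0] by simp
    then show ?thesis using greater by (simp add: field_simps)
  next
    case less
    \<comment> \<open>seen from \<open>x\<close>, the chords to \<open>u0\<close> and to \<open>v0\<close> have a common slope \<open>s\<close>, which must be \<open>a\<close>\<close>
    define s where "s = (recR F u0 - recR F x) / (u0 - x)"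
    have "(recR F v0 - recR F x) / (v0 - x) = s"
      unfolding s_def using chord_slope_const[OF x(1) _ v0(2) less u0(2)] less v0 by simp
    then have "recR F v0 - recR F x = s * (v0 - x)" "recR F u0 - recR F x = s * (u0 - x)"
      using less v0 unfolding s_def by (simp_all add: field_simps)
    then have "recR F v0 - recR F u0 = s * (v0 - u0)" by (simp add: algebra_simps)
    then have "s = a" unfolding a_def using v0 by simp
    then show ?thesis using \<open>recR F u0 - recR F x = s * (u0 - x)\<close> by (simp add: algebra_simps)
  qed simp
  then show ?thesis using that[OF a, of "recR F u0 - a * u0"] by (simp add: algebra_simps)
qed

lemma exponential_of_regression:
  "lF F > -\<infinity> \<and> rF F = \<infinity> \<and>
   (\<exists>c>0. \<forall>x. ereal x \<ge> lF F \<longrightarrow> F x = 1 - exp (- c * (x - real_of_ereal (lF F))))"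
  using recR_affine exponential_of_affine_recR by metis

end

end

lemma distributed_imp_cdf_with_density:
  fixes M :: "'a measure" and X :: "'a \<Rightarrow> real" and f F :: "real \<Rightarrow> real"
  assumes P: "prob_space M"
    and distr: "distributed M lborel X (\<lambda>x. ennreal (f x))"
    and f_nonneg: "\<And>x. f x \<ge> 0"
    and F_def: "F = cdf (distr M borel X)"
  shows "cdf_with_density f F"
proof -
  interpret prob_space M by (rule P)
  have f_borel: "f \<in> borel_measurable lborel"
    using distributed_real_measurable[OF _ distr] f_nonneg by simp
  interpret law: real_distribution "distr M borel X"
    using distr unfolding distributed_def by simp
  have "distr M borel X = distr M lborel X" by (rule distr_cong) auto
  also have "\<dots> = density lborel (\<lambda>x. ennreal (f x))"
    using distr by (rule distributed_distr_eq_density)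
  finally have law: "distr M borel X = density lborel (\<lambda>x. ennreal (f x))" .
  have f_int: "integrable lborel f"
    using distributed_integrable[OF distr, of "\<lambda>_. 1"] f_nonneg by simp
  have prob: "measure (distr M borel X) A = (LBINT t:A. f t)" if A: "A \<in> sets borel" for A
  proof -
    have "measure (distr M borel X) A = integral\<^sup>L (density lborel (\<lambda>x. ennreal (f x))) (indicator A)"
      using A by (simp add: law)
    also have "\<dots> = integral\<^sup>L lborel (\<lambda>x. f x *\<^sub>R indicator A x)"
      by (rule integral_density) (use A f_borel f_nonneg in auto)
    finally show ?thesis unfolding set_lebesgue_integral_def by (simp add: mult.commute)
  qed
  show ?thesis
  proof
    show "f \<in> borel_measurable borel" using f_borel by simp
    show "set_integrable lborel {a<..b} f" for a b
      unfolding set_integrable_def using f_int by (intro integrable_mult_indicator) auto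
    show "(LBINT t:{a<..b}. f t) = F b - F a" if "a \<le> b" for a b
    proof (cases "a = b")
      case False
      then show ?thesis using that law.cdf_diff_eq prob[of "{a<..b}"] by (simp add: F_def)
    qed (simp add: set_lebesgue_integral_def)
    show "isCont F x" for x
    proof -
      have "(LBINT t:{x}. f t) = (LBINT t:{x}. f x)" by (rule set_lebesgue_integral_cong) auto
      then have "measure (distr M borel X) {x} = 0" using prob[of "{x}"] by (simp add: set_integral_const)
      then show ?thesis unfolding F_def by (simp add: law.isCont_cdf)
    qed
    show "(F \<longlongrightarrow> 0) at_bot" unfolding F_def by (rule law.cdf_lim_at_bot)
    show "(F \<longlongrightarrow> 1) at_top" unfolding F_def by (rule law.cdf_lim_at_top_prob)
  qed (rule f_nonneg)
qed

theorem mainTheorem3: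
  fixes M :: "'a measure" and X :: "'a \<Rightarrow> real" and f :: "real \<Rightarrow> real"
    and F :: "real \<Rightarrow> real" and n k :: nat
  assumes "prob_space M"
    and "distributed M lborel X (\<lambda>x. ennreal (f x))"
    and "\<And>x. f x \<ge> 0"
    and "F = cdf (distr M borel X)"
    and "n \<ge> 2" and "1 \<le> k" and "k \<le> n - 1"
  shows "(\<forall>u v. lF F < ereal u \<and> u < v \<and> ereal v < rF F \<longrightarrow>
            rec_cond_exp F f k 1 u v = (u + real k * v) / (real k + 1))
         \<longleftrightarrow>
         (lF F > -\<infinity> \<and> rF F = \<infinity> \<and>
          (\<exists>c>0. \<forall>x. ereal x \<ge> lF F \<longrightarrow>
              F x = 1 - exp (- c * (x - real_of_ereal (lF F)))))"
proof -
  interpret cdf_with_density f F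
    using distributed_imp_cdf_with_density[OF assms(1-4)] .
  show ?thesis
  proof
    assume "\<forall>u v. lF F < ereal u \<and> u < v \<and> ereal v < rF F \<longrightarrow>
              rec_cond_exp F f k 1 u v = (u + real k * v) / (real k + 1)"
    then show "lF F > -\<infinity> \<and> rF F = \<infinity> \<and>
        (\<exists>c>0. \<forall>x. ereal x \<ge> lF F \<longrightarrow> F x = 1 - exp (- c * (x - real_of_ereal (lF F))))"
      by (intro exponential_of_regression[OF assms(6)]) blast
  next
    assume exp_law: "lF F > -\<infinity> \<and> rF F = \<infinity> \<and>
        (\<exists>c>0. \<forall>x. ereal x \<ge> lF F \<longrightarrow> F x = 1 - exp (- c * (x - real_of_ereal (lF F))))"
    \<comment> \<open>\<open>l\<^sub>F < \<infinity>\<close> because the support is non-empty\<close>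
    obtain u0 where "lF F < ereal u0" by (rule interior_point)
    with exp_law obtain c l0 where c: "c > 0" and l0: "lF F = ereal l0"
      and law: "\<And>x. x \<ge> l0 \<Longrightarrow> F x = 1 - exp (- c * (x - l0))"
      by (cases "lF F") auto
    show "\<forall>u v. lF F < ereal u \<and> u < v \<and> ereal v < rF F \<longrightarrow>
        rec_cond_exp F f k 1 u v = (u + real k * v) / (real k + 1)"
      using cond_exp_of_exponential[OF assms(6) c law] l0 by auto
  qed
qed

end
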